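(* Let $m,n\in\mathbb{N}$, $A\in\mathcal{A}(\bm{p})^{m\times n}$ and $b\in\mathcal{A}(\bm{p})^{m\times1}$. The following are equivalent: (1) there exists $x\in\mathcal{A}(\bm{p})^{n\times1}$ with $A\ast x=b$; (2) there exists $\delta>0$ such that for all $k\in\mathbb{N}_0$ and all $y\in\mathbb{C}^{m\times1}$, $\|(\widehat A(k))^*y\|_2\ge\delta\,|\langle y,\widehat b(k)\rangle_2|$.
   Context: Fix $\bm{p}:\mathbb{N}_0\to(0,\infty)$ with $\lim_{n\to\infty}\bm{p}(n)^{1/n}=\infty$. For an entire function $f$ write $f(z)=\sum_{n\ge0}\widehat f(n)z^n$. $\mathcal{A}(\bm{p})$ is the set of entire functions $f$ with $\sup_{n\ge 0}\bm{p}(n)|\widehat f(n)|<\infty$, with pointwise addition and scalar multiplication and the weighted Hadamard product $(f\ast g)(z)=\sum_{n\ge0}\bm{p}(n)\widehat f(n)\widehat g(n)z^n$. Matrix products of matrices over $\mathcal{A}(\bm{p})$ use $\ast$ for entrywise multiplication. For a matrix $A=[a_{ij}]$ with entries in $\mathcal{A}(\bm{p})$ and $k\in\mathbb{N}_0$, $\widehat A(k)$ is the complex matrix $[\widehat{a_{ij}}(k)]$. $\langle\cdot,\cdot\rangle_2$ is the Euclidean inner product on $\mathbb{C}^{m\times 1}$, $\|\cdot\|_2$ the Euclidean norm, and $M^*$ the conjugate transpose of a complex matrix $M$. *)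

theory Defs
  imports "HOL-Analysis.Analysis"
begin

definition coef :: "(complex \<Rightarrow> complex) \<Rightarrow> nat \<Rightarrow> complex" where
  "coef f n = (deriv ^^ n) f 0 / of_nat (fact n)"

definition admissible_weight :: "(nat \<Rightarrow> real) \<Rightarrow> bool" where
  "admissible_weight p \<longleftrightarrow> (\<forall>n. p n > 0) \<and> filterlim (\<lambda>n. root n (p n)) at_top sequentially"

definition Ap :: "(nat \<Rightarrow> real) \<Rightarrow> (complex \<Rightarrow> complex) set" where
  "Ap p = {f. f holomorphic_on UNIV \<and> bdd_above (range (\<lambda>n. p n * cmod (coef f n)))}"

definition hprod :: "(nat \<Rightarrow> real) \<Rightarrow> (complex \<Rightarrow> complex) \<Rightarrow> (complex \<Rightarrow> complex) \<Rightarrow> complex \<Rightarrow> complex" where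
  "hprod p f g = (\<lambda>z. \<Sum>n. of_real (p n) * coef f n * coef g n * z ^ n)"

definition mat_hprod :: "(nat \<Rightarrow> real) \<Rightarrow> nat \<Rightarrow> (nat \<Rightarrow> nat \<Rightarrow> complex \<Rightarrow> complex)
    \<Rightarrow> (nat \<Rightarrow> complex \<Rightarrow> complex) \<Rightarrow> nat \<Rightarrow> complex \<Rightarrow> complex" where
  "mat_hprod p n A x = (\<lambda>i z. \<Sum>j<n. hprod p (A i j) (x j) z)"

definition adj_apply_norm :: "nat \<Rightarrow> nat \<Rightarrow> (nat \<Rightarrow> nat \<Rightarrow> complex) \<Rightarrow> (nat \<Rightarrow> complex) \<Rightarrow> real" where
  "adj_apply_norm m n M y = sqrt (\<Sum>j<n. (cmod (\<Sum>i<m. cnj (M i j) * y i))\<^sup>2)"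

definition inner2 :: "nat \<Rightarrow> (nat \<Rightarrow> complex) \<Rightarrow> (nat \<Rightarrow> complex) \<Rightarrow> complex" where
  "inner2 m y w = (\<Sum>i<m. y i * cnj (w i))"

end

theory Submission
  imports Defs "HOL-Complex_Analysis.Complex_Analysis"
begin

text \<open>Write \<open>A\<^sub>k\<close>, \<open>b\<^sub>k\<close>, \<open>x\<^sub>k\<close> for the \<open>k\<close>-th Taylor coefficients. Coefficientwise,
  \<open>A \<ast> x = b\<close> says \<open>A\<^sub>k v\<^sub>k = b\<^sub>k\<close> for every \<open>k\<close>, where \<open>v\<^sub>k = p(k) x\<^sub>k\<close>; and \<open>x \<in> A(p)\<close> means
  exactly that the vectors \<open>v\<^sub>k\<close> are uniformly bounded, because the growth of \<open>p\<close> turns every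
  such coefficient sequence into an entire function. The theorem is therefore a uniform version of
  a finite-dimensional fact: \<open>M v = c\<close> has a solution with \<open>\<parallel>v\<parallel> \<le> 1/\<delta>\<close> iff
  \<open>\<parallel>M\<^sup>* y\<parallel> \<ge> \<delta> |\<langle>y, c\<rangle>|\<close> for all \<open>y\<close>. One direction is the estimate
  \<open>|\<langle>y, M v\<rangle>| = |\<langle>M\<^sup>* y, v\<rangle>|\<close>. For the other, the Fredholm alternative either solves the normal
  equations \<open>M M\<^sup>* u = c\<close>, and then \<open>v = M\<^sup>* u\<close> satisfies
  \<open>\<parallel>v\<parallel>\<^sup>2 = \<langle>u, c\<rangle> \<le> \<parallel>M\<^sup>* u\<parallel>/\<delta> = \<parallel>v\<parallel>/\<delta>\<close>, or yields \<open>y\<close> with \<open>M\<^sup>* y = 0\<close> and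
  \<open>\<langle>y, c\<rangle> \<noteq> 0\<close>, contradicting the inequality.\<close>

definition mat_vec :: "nat \<Rightarrow> (nat \<Rightarrow> nat \<Rightarrow> 'a::semiring_0) \<Rightarrow> (nat \<Rightarrow> 'a) \<Rightarrow> nat \<Rightarrow> 'a" where
  "mat_vec n M v = (\<lambda>i. \<Sum>j<n. M i j * v j)"

definition adj_vec :: "nat \<Rightarrow> (nat \<Rightarrow> nat \<Rightarrow> complex) \<Rightarrow> (nat \<Rightarrow> complex) \<Rightarrow> nat \<Rightarrow> complex" where
  "adj_vec m M y = (\<lambda>j. \<Sum>i<m. cnj (M i j) * y i)"

lemma adj_apply_norm_eq: "adj_apply_norm m n M y = sqrt (\<Sum>j<n. (cmod (adj_vec m M y j))\<^sup>2)"
  unfolding adj_apply_norm_def adj_vec_def ..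

lemma adj_apply_norm_nonneg: "adj_apply_norm m n M y \<ge> 0"
  unfolding adj_apply_norm_def by (intro real_sqrt_ge_zero sum_nonneg) auto

lemma inner2_cong: "(\<And>i. i < m \<Longrightarrow> w i = w' i) \<Longrightarrow> inner2 m y w = inner2 m y w'"
  unfolding inner2_def by (intro sum.cong) auto

lemma inner2_self: "inner2 n v v = of_real (\<Sum>j<n. (cmod (v j))\<^sup>2)"
  unfolding inner2_def of_real_sum complex_norm_square ..

lemma inner2_mat_vec: "inner2 m y (mat_vec n M v) = inner2 n (adj_vec m M y) v"
proof -
  have "inner2 m y (mat_vec n M v) = (\<Sum>i<m. \<Sum>j<n. cnj (M i j) * y i * cnj (v j))"
    by (simp add: inner2_def mat_vec_def cnj_sum sum_distrib_left mult_ac)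
  also have "\<dots> = inner2 n (adj_vec m M y) v"
    by (subst sum.swap) (simp add: inner2_def adj_vec_def sum_distrib_right)
  finally show ?thesis .
qed

lemma mat_vec_adj_vec:
  "mat_vec n M (adj_vec m M u) = mat_vec m (\<lambda>i l. \<Sum>j<n. M i j * cnj (M l j)) u"
proof
  fix i
  have "mat_vec n M (adj_vec m M u) i = (\<Sum>j<n. \<Sum>l<m. M i j * cnj (M l j) * u l)"
    by (simp add: mat_vec_def adj_vec_def sum_distrib_left mult_ac)
  also have "\<dots> = mat_vec m (\<lambda>i l. \<Sum>j<n. M i j * cnj (M l j)) u i"
    by (subst sum.swap) (simp add: mat_vec_def sum_distrib_right)
  finally show "mat_vec n M (adj_vec m M u) i = mat_vec m (\<lambda>i l. \<Sum>j<n. M i j * cnj (M l j)) u i" .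
qed

lemma norm_inner2_mat_vec_le:
  "cmod (inner2 m y (mat_vec n M v)) \<le> (\<Sum>j<n. cmod (v j)) * adj_apply_norm m n M y"
proof -
  have adj: "cmod (adj_vec m M y j) \<le> adj_apply_norm m n M y" if "j < n" for j
    unfolding adj_apply_norm_eq using that by (intro real_le_rsqrt member_le_sum) auto
  have "cmod (inner2 m y (mat_vec n M v)) \<le> (\<Sum>j<n. cmod (adj_vec m M y j) * cmod (v j))"
    unfolding inner2_mat_vec unfolding inner2_def by (rule order_trans[OF norm_sum]) (simp add: norm_mult)
  also have "\<dots> \<le> (\<Sum>j<n. adj_apply_norm m n M y * cmod (v j))"
    using adj by (intro sum_mono mult_right_mono) auto
  finally show ?thesis by (simp add: sum_distrib_left mult.commute)
qed

lemma adj_apply_norm_eq_0_if_gram_kernel: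
  assumes "\<And>l. l < m \<Longrightarrow> mat_vec n M (adj_vec m M y) l = 0"
  shows "adj_apply_norm m n M y = 0"
proof -
  have "of_real (\<Sum>j<n. (cmod (adj_vec m M y j))\<^sup>2) = inner2 m y (mat_vec n M (adj_vec m M y))"
    by (simp add: inner2_mat_vec inner2_self)
  also have "\<dots> = 0"
    using assms by (simp add: inner2_def)
  finally show ?thesis
    unfolding adj_apply_norm_eq by (simp only: of_real_eq_0_iff real_sqrt_eq_zero_cancel_iff)
qed

lemma gauss_elim_solution:
  fixes M :: "nat \<Rightarrow> nat \<Rightarrow> 'a::field"
  assumes piv: "M r n \<noteq> 0"
    and sol: "\<And>i. i < m \<Longrightarrow> mat_vec n (\<lambda>i j. M i j - M i n / M r n * M r j) v i = b i - M i n / M r n * b r"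
  shows "\<exists>v'. \<forall>i<m. mat_vec (Suc n) M v' i = b i"
proof (intro exI allI impI)
  fix i assume "i < m"
  have "mat_vec n (\<lambda>i j. M i j - M i n / M r n * M r j) v i = mat_vec n M v i - M i n / M r n * mat_vec n M v r"
    by (simp add: mat_vec_def algebra_simps sum_subtractf sum_distrib_left)
  with sol[OF \<open>i < m\<close>]
  have "mat_vec n M v i - M i n / M r n * mat_vec n M v r = b i - M i n / M r n * b r"
    by metis
  moreover have "mat_vec (Suc n) M (v(n := (b r - mat_vec n M v r) / M r n)) i
      = mat_vec n M v i + M i n * ((b r - mat_vec n M v r) / M r n)"
    by (simp add: mat_vec_def)
  ultimately show "mat_vec (Suc n) M (v(n := (b r - mat_vec n M v r) / M r n)) i = b i"
    using piv by (simp add: field_simps)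
qed

lemma gauss_elim_certificate:
  fixes M :: "nat \<Rightarrow> nat \<Rightarrow> 'a::field"
  assumes r: "r < m" and piv: "M r n \<noteq> 0"
    and ker: "\<forall>j<n. (\<Sum>i<m. y i * (M i j - M i n / M r n * M r j)) = 0"
    and nz: "(\<Sum>i<m. y i * (b i - M i n / M r n * b r)) \<noteq> 0"
  shows "\<exists>y'. (\<forall>j<Suc n. (\<Sum>i<m. y' i * M i j) = 0) \<and> (\<Sum>i<m. y' i * b i) \<noteq> 0"
proof -
  define s where "s = (\<Sum>l<m. y l * M l n)"
  define y' where "y' i = y i - (if i = r then s / M r n else 0)" for i
  have y': "(\<Sum>i<m. y' i * f i) = (\<Sum>i<m. y i * f i) - s / M r n * f r" for f
    using r by (simp add: y'_def left_diff_distrib sum_subtractf if_distrib[of "\<lambda>t. t * f _"]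
        cong: if_cong)
  have elim: "(\<Sum>i<m. y i * (f i - M i n / M r n * g)) = (\<Sum>i<m. y i * f i) - s / M r n * g" for f g
    by (simp add: s_def algebra_simps sum_subtractf sum_distrib_left sum_distrib_right sum_divide_distrib)
  have "(\<Sum>i<m. y' i * M i j) = 0" if "j < Suc n" for j
  proof (cases "j = n")
    case True
    then show ?thesis using piv by (simp add: y' s_def)
  next
    case False
    then show ?thesis using that ker elim[of "\<lambda>i. M i j" "M r j"] by (simp add: y')
  qed
  moreover have "(\<Sum>i<m. y' i * b i) \<noteq> 0"
    using nz elim[of b "b r"] by (simp add: y')
  ultimately show ?thesis by blast
qed

theorem fredholm_alternative:
  fixes M :: "nat \<Rightarrow> nat \<Rightarrow> 'a::field"
  shows "(\<exists>v. \<forall>i<m. mat_vec n M v i = b i) \<or>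
         (\<exists>y. (\<forall>j<n. (\<Sum>i<m. y i * M i j) = 0) \<and> (\<Sum>i<m. y i * b i) \<noteq> 0)"
proof (induction n arbitrary: M b)
  case 0
  show ?case
  proof (cases "\<forall>i<m. b i = 0")
    case False
    then obtain r where "r < m" "b r \<noteq> 0" by auto
    then have "(\<Sum>i<m. (if i = r then 1 else 0) * b i) \<noteq> 0"
      by (simp add: if_distrib[of "\<lambda>t. t * b _"] cong: if_cong)
    then show ?thesis by auto
  qed (auto simp: mat_vec_def)
next
  case (Suc n)
  show ?case
  proof (cases "\<forall>i<m. M i n = 0")
    case True
    from Suc.IH[of M b] show ?thesis
    proof (elim disjE exE conjE)
      fix v assume "\<forall>i<m. mat_vec n M v i = b i"
      then have "\<forall>i<m. mat_vec (Suc n) M v i = b i"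
        using True by (simp add: mat_vec_def)
      then show ?thesis by blast
    next
      fix y assume "\<forall>j<n. (\<Sum>i<m. y i * M i j) = 0" "(\<Sum>i<m. y i * b i) \<noteq> 0"
      moreover have "(\<Sum>i<m. y i * M i n) = 0"
        using True by simp
      ultimately show ?thesis
        by (metis less_Suc_eq)
    qed
  next
    case False
    then obtain r where r: "r < m" "M r n \<noteq> 0" by auto
    from Suc.IH[of "\<lambda>i j. M i j - M i n / M r n * M r j" "\<lambda>i. b i - M i n / M r n * b r"]
    show ?thesis
    proof (elim disjE exE conjE)
      fix v assume "\<forall>i<m. mat_vec n (\<lambda>i j. M i j - M i n / M r n * M r j) v i = b i - M i n / M r n * b r"
      then show ?thesis using gauss_elim_solution[of M r n m v b] r(2) by blast
    next
      fix y assume "\<forall>j<n. (\<Sum>i<m. y i * (M i j - M i n / M r n * M r j)) = 0"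
        and "(\<Sum>i<m. y i * (b i - M i n / M r n * b r)) \<noteq> 0"
      then show ?thesis using gauss_elim_certificate[of r m M n y b] r by simp
    qed
  qed
qed

lemma sqrt_le_inverse_if_le_sqrt:
  fixes \<delta> S :: real
  assumes "\<delta> * S \<le> sqrt S" "S \<ge> 0" "\<delta> > 0"
  shows "sqrt S \<le> 1 / \<delta>"
proof (cases "S = 0")
  case False
  with assms(2) have pos: "sqrt S > 0" by simp
  have "\<delta> * sqrt S * sqrt S \<le> 1 * sqrt S"
    using assms(1,2) by (simp add: mult.assoc)
  then have "\<delta> * sqrt S \<le> 1"
    using pos by (rule mult_right_le_imp_le)
  with assms(3) show ?thesis
    by (simp add: field_simps)
qed (use assms in simp)

lemma bounded_solution_exists:
  fixes M :: "nat \<Rightarrow> nat \<Rightarrow> complex"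
  assumes "\<delta> > 0" and ineq: "\<And>y. \<delta> * cmod (inner2 m y c) \<le> adj_apply_norm m n M y"
  shows "\<exists>v. (\<forall>i<m. mat_vec n M v i = c i) \<and> sqrt (\<Sum>j<n. (cmod (v j))\<^sup>2) \<le> 1 / \<delta>"
proof -
  define G where "G = (\<lambda>i l. \<Sum>j<n. M i j * cnj (M l j))"
  from fredholm_alternative[where M = G and b = c and m = m and n = m]
  consider (sol) u where "\<forall>i<m. mat_vec m G u i = c i"
    | (cert) y where "\<forall>l<m. (\<Sum>i<m. y i * G i l) = 0" "(\<Sum>i<m. y i * c i) \<noteq> 0"
    by blast
  then show ?thesis
  proof cases
    case sol
    define v where "v = adj_vec m M u"
    define S where "S = (\<Sum>j<n. (cmod (v j))\<^sup>2)"
    have Mv: "\<forall>i<m. mat_vec n M v i = c i"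
      using sol by (simp add: v_def mat_vec_adj_vec G_def)
    have "inner2 m u c = inner2 m u (mat_vec n M v)"
      using Mv by (intro inner2_cong) auto
    also have "\<dots> = of_real S"
      by (simp add: inner2_mat_vec inner2_self v_def S_def)
    finally have "inner2 m u c = of_real S" .
    moreover have "adj_apply_norm m n M u = sqrt S"
      by (simp add: adj_apply_norm_eq S_def v_def)
    moreover have "S \<ge> 0"
      unfolding S_def by (intro sum_nonneg) auto
    ultimately have "\<delta> * S \<le> sqrt S" "S \<ge> 0"
      using ineq[of u] by simp_all
    then have "sqrt S \<le> 1 / \<delta>"
      using \<open>\<delta> > 0\<close> by (rule sqrt_le_inverse_if_le_sqrt)
    with Mv show ?thesis
      unfolding S_def by blast
  next
    case cert
    define y' where "y' i = cnj (y i)" for i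
    have "mat_vec n M (adj_vec m M y') l = 0" if "l < m" for l
    proof -
      have "mat_vec n M (adj_vec m M y') l = cnj (\<Sum>i<m. y i * G i l)"
        unfolding mat_vec_adj_vec by (simp add: G_def mat_vec_def y'_def cnj_sum mult_ac)
      then show ?thesis using cert(1) that by simp
    qed
    then have "adj_apply_norm m n M y' = 0"
      by (rule adj_apply_norm_eq_0_if_gram_kernel)
    moreover have "inner2 m y' c = cnj (\<Sum>i<m. y i * c i)"
      by (simp add: inner2_def y'_def cnj_sum)
    ultimately have "\<delta> * cmod (cnj (\<Sum>i<m. y i * c i)) \<le> 0"
      using ineq[of y'] by metis
    with \<open>\<delta> > 0\<close> cert(2) show ?thesis
      by (simp only: complex_mod_cnj) (simp add: mult_le_0_iff)
  qed
qed

lemma admissible_weight_pos: "admissible_weight p \<Longrightarrow> p n > 0"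
  unfolding admissible_weight_def by blast

lemma admissible_weight_eventually_power_le:
  assumes "admissible_weight p" "R \<ge> 0"
  shows "eventually (\<lambda>n. R ^ n \<le> p n) sequentially"
proof -
  have "eventually (\<lambda>n. R \<le> root n (p n)) sequentially"
    using assms(1) unfolding admissible_weight_def filterlim_at_top by blast
  then show ?thesis
    using eventually_gt_at_top[of 0]
  proof eventually_elim
    case (elim n)
    then have "R ^ n \<le> root n (p n) ^ n"
      using assms(2) by (intro power_mono) auto
    also have "\<dots> = p n"
      using elim admissible_weight_pos[OF assms(1), of n] by (simp add: real_root_pow_pos2)
    finally show ?case .
  qed
qed

lemma conv_radius_eq_inf_if_weighted_bound:
  fixes c :: "nat \<Rightarrow> complex"
  assumes adm: "admissible_weight p" and bound: "\<And>k. p k * cmod (c k) \<le> K"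
  shows "conv_radius c = \<infinity>"
proof -
  note pos = admissible_weight_pos[OF adm]
  have "0 \<le> p 0 * cmod (c 0)"
    using pos[of 0] by simp
  with bound[of 0] have "K \<ge> 0"
    by linarith
  have "\<infinity> \<le> conv_radius c"
  proof (rule conv_radius_geI_ex')
    fix r :: real assume "r > 0"
    then have "2 * r \<ge> 0" by simp
    have "eventually (\<lambda>n. norm (c n * of_real r ^ n) \<le> K * (1/2) ^ n) sequentially"
      using admissible_weight_eventually_power_le[OF adm \<open>2 * r \<ge> 0\<close>]
    proof eventually_elim
      case (elim n)
      have "norm (c n * of_real r ^ n) = (p n * cmod (c n)) * (r ^ n / p n)"
        using \<open>r > 0\<close> pos[of n] by (simp add: norm_mult norm_power)
      also have "\<dots> \<le> K * (r ^ n / (2 * r) ^ n)"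
        using elim \<open>r > 0\<close> pos[of n] \<open>K \<ge> 0\<close>
        by (intro mult_mono bound divide_left_mono) auto
      also have "\<dots> = K * (1/2) ^ n"
        using \<open>r > 0\<close> by (simp add: power_mult_distrib power_divide)
      finally show ?case .
    qed
    then show "summable (\<lambda>n. c n * of_real r ^ n)"
      by (rule summable_comparison_test_ev) (intro summable_mult summable_geometric; simp)
  qed
  then show ?thesis
    by (simp add: top.extremum_unique)
qed

lemma
  fixes c :: "nat \<Rightarrow> complex"
  assumes "conv_radius c = \<infinity>"
  shows holomorphic_power_series_entire: "(\<lambda>z. \<Sum>n. c n * z ^ n) holomorphic_on UNIV"
    and coef_power_series: "coef (\<lambda>z. \<Sum>n. c n * z ^ n) k = c k"
proof -
  have eval: "(\<lambda>z. \<Sum>n. c n * z ^ n) = eval_fps (Abs_fps c)"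
    by (simp add: eval_fps_def fun_eq_iff)
  have radius: "fps_conv_radius (Abs_fps c) = \<infinity>"
    using assms by (simp add: fps_conv_radius_def)
  show "(\<lambda>z. \<Sum>n. c n * z ^ n) holomorphic_on UNIV"
    unfolding eval by (rule holomorphic_on_eval_fps) (simp add: radius)
  have "fps_nth (Abs_fps c) k = (deriv ^^ k) (eval_fps (Abs_fps c)) 0 / fact k"
    by (rule fps_nth_conv_deriv) (simp add: radius)
  then show "coef (\<lambda>z. \<Sum>n. c n * z ^ n) k = c k"
    unfolding eval coef_def by simp
qed

lemma coef_sums:
  assumes "f holomorphic_on UNIV"
  shows "(\<lambda>n. coef f n * z ^ n) sums f z"
proof -
  have "(\<lambda>n. (deriv ^^ n) f 0 / fact n * (z - 0) ^ n) sums f z"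
    by (rule holomorphic_power_series[where r = "norm z + 1"])
      (auto intro: holomorphic_on_subset[OF assms])
  then show ?thesis
    by (simp add: coef_def)
qed

lemma entire_eq_if_coef_eq:
  assumes "f holomorphic_on UNIV" "g holomorphic_on UNIV" "\<And>n. coef f n = coef g n"
  shows "f = g"
proof
  fix z
  show "f z = g z"
    using coef_sums[OF assms(1), of z] coef_sums[OF assms(2), of z] assms(3)
    by (simp add: sums_unique2)
qed

lemma coef_sum:
  fixes n :: nat
  assumes "\<And>j. j < n \<Longrightarrow> f j holomorphic_on UNIV"
  shows "coef (\<lambda>z. \<Sum>j<n. f j z) k = (\<Sum>j<n. coef (f j) k)"
  using assms
proof (induction n)
  case 0
  have "(deriv ^^ k) (\<lambda>z::complex. 0::complex) = (\<lambda>z. 0)"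
    by (induction k) auto
  then show ?case
    by (simp add: coef_def)
next
  case (Suc n)
  have "(\<lambda>z. \<Sum>j<n. f j z) holomorphic_on UNIV" "f n holomorphic_on UNIV"
    using Suc.prems by (auto intro!: holomorphic_on_sum)
  from higher_deriv_add[OF this, of 0 k]
  have "coef (\<lambda>z. (\<Sum>j<n. f j z) + f n z) k = coef (\<lambda>z. \<Sum>j<n. f j z) k + coef (f n) k"
    unfolding coef_def by (simp add: add_divide_distrib)
  with Suc show ?case
    by simp
qed

lemma Ap_coef_bound:
  assumes "admissible_weight p" "f \<in> Ap p"
  obtains C where "C \<ge> 0" "\<And>k. p k * cmod (coef f k) \<le> C"
proof -
  from assms(2) obtain C where C: "\<And>k. p k * cmod (coef f k) \<le> C"
    unfolding Ap_def bdd_above_def by auto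
  moreover have "0 \<le> p 0 * cmod (coef f 0)"
    using admissible_weight_pos[OF assms(1)] by (simp add: less_imp_le)
  ultimately show ?thesis
    using that order_trans by blast
qed

lemma Ap_holomorphic: "f \<in> Ap p \<Longrightarrow> f holomorphic_on UNIV"
  unfolding Ap_def by blast

lemma power_series_in_Ap:
  fixes c :: "nat \<Rightarrow> complex"
  assumes adm: "admissible_weight p" and bound: "\<And>k. p k * cmod (c k) \<le> K"
  shows "(\<lambda>z. \<Sum>k. c k * z ^ k) \<in> Ap p"
proof -
  note radius = conv_radius_eq_inf_if_weighted_bound[OF adm bound]
  have "bdd_above (range (\<lambda>k. p k * cmod (coef (\<lambda>z. \<Sum>k. c k * z ^ k) k)))"
    using bound by (intro bdd_aboveI2) (simp add: coef_power_series[OF radius])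
  with holomorphic_power_series_entire[OF radius] show ?thesis
    unfolding Ap_def by blast
qed

lemma hprod_weighted_bound:
  assumes adm: "admissible_weight p" and "f \<in> Ap p" "g \<in> Ap p"
  obtains K where "\<And>k. p k * cmod (of_real (p k) * coef f k * coef g k) \<le> K"
proof -
  obtain Cf where Cf: "Cf \<ge> 0" "\<And>k. p k * cmod (coef f k) \<le> Cf"
    using Ap_coef_bound[OF adm \<open>f \<in> Ap p\<close>] by blast
  obtain Cg where Cg: "Cg \<ge> 0" "\<And>k. p k * cmod (coef g k) \<le> Cg"
    using Ap_coef_bound[OF adm \<open>g \<in> Ap p\<close>] by blast
  have "p k * cmod (of_real (p k) * coef f k * coef g k) \<le> Cf * Cg" for k
  proof -
    have "p k * cmod (of_real (p k) * coef f k * coef g k) = (p k * cmod (coef f k)) * (p k * cmod (coef g k))"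
      using admissible_weight_pos[OF adm, of k] by (simp add: norm_mult mult_ac)
    also have "\<dots> \<le> Cf * Cg"
      using admissible_weight_pos[OF adm, of k] Cf Cg by (intro mult_mono) auto
    finally show ?thesis .
  qed
  then show ?thesis by (rule that)
qed

lemma
  assumes adm: "admissible_weight p" and "f \<in> Ap p" "g \<in> Ap p"
  shows hprod_in_Ap: "hprod p f g \<in> Ap p"
    and coef_hprod: "coef (hprod p f g) k = of_real (p k) * coef f k * coef g k"
proof -
  obtain K where bound: "\<And>k. p k * cmod (of_real (p k) * coef f k * coef g k) \<le> K"
    using hprod_weighted_bound[OF assms] by blast
  show "hprod p f g \<in> Ap p"
    unfolding hprod_def by (rule power_series_in_Ap[OF adm bound])
  show "coef (hprod p f g) k = of_real (p k) * coef f k * coef g k"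
    unfolding hprod_def by (rule coef_power_series[OF conv_radius_eq_inf_if_weighted_bound[OF adm bound]])
qed

lemma
  assumes adm: "admissible_weight p"
    and A: "\<forall>j<n. A i j \<in> Ap p" and x: "\<forall>j<n. x j \<in> Ap p"
  shows mat_hprod_holomorphic: "mat_hprod p n A x i holomorphic_on UNIV"
    and coef_mat_hprod: "coef (mat_hprod p n A x i) k
      = mat_vec n (\<lambda>i j. coef (A i j) k) (\<lambda>j. of_real (p k) * coef (x j) k) i"
proof -
  have hol: "hprod p (A i j) (x j) holomorphic_on UNIV" if "j < n" for j
    using A x that by (intro Ap_holomorphic[of _ p] hprod_in_Ap[OF adm]) auto
  then show "mat_hprod p n A x i holomorphic_on UNIV"
    unfolding mat_hprod_def by (intro holomorphic_on_sum) auto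
  have "coef (mat_hprod p n A x i) k = (\<Sum>j<n. coef (hprod p (A i j) (x j)) k)"
    unfolding mat_hprod_def by (rule coef_sum[OF hol])
  also have "\<dots> = mat_vec n (\<lambda>i j. coef (A i j) k) (\<lambda>j. of_real (p k) * coef (x j) k) i"
    using A x by (simp add: mat_vec_def coef_hprod[OF adm] mult_ac)
  finally show "coef (mat_hprod p n A x i) k
      = mat_vec n (\<lambda>i j. coef (A i j) k) (\<lambda>j. of_real (p k) * coef (x j) k) i" .
qed

lemma mat_hprod_eq_iff_coef:
  assumes adm: "admissible_weight p"
    and A: "\<forall>i<m. \<forall>j<n. A i j \<in> Ap p" and x: "\<forall>j<n. x j \<in> Ap p" and b: "\<forall>i<m. b i \<in> Ap p"
  shows "(\<forall>i<m. mat_hprod p n A x i = b i) \<longleftrightarrow>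
    (\<forall>k. \<forall>i<m. mat_vec n (\<lambda>i j. coef (A i j) k) (\<lambda>j. of_real (p k) * coef (x j) k) i = coef (b i) k)"
proof (intro iffI allI impI)
  fix k i assume eq: "\<forall>i<m. mat_hprod p n A x i = b i" and "i < m"
  with A have "coef (mat_hprod p n A x i) k
      = mat_vec n (\<lambda>i j. coef (A i j) k) (\<lambda>j. of_real (p k) * coef (x j) k) i"
    by (intro coef_mat_hprod[OF adm _ x]) auto
  with eq \<open>i < m\<close> show "mat_vec n (\<lambda>i j. coef (A i j) k) (\<lambda>j. of_real (p k) * coef (x j) k) i = coef (b i) k"
    by simp
next
  fix i assume coef_eq: "\<forall>k. \<forall>i<m. mat_vec n (\<lambda>i j. coef (A i j) k) (\<lambda>j. of_real (p k) * coef (x j) k) i = coef (b i) k"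
    and "i < m"
  with A have A_i: "\<forall>j<n. A i j \<in> Ap p" by blast
  show "mat_hprod p n A x i = b i"
  proof (rule entire_eq_if_coef_eq)
    show "mat_hprod p n A x i holomorphic_on UNIV"
      by (rule mat_hprod_holomorphic[where A = A and i = i, OF adm A_i x])
    show "b i holomorphic_on UNIV"
      using b \<open>i < m\<close> by (intro Ap_holomorphic[of _ p]) auto
    show "coef (mat_hprod p n A x i) k = coef (b i) k" for k
      using coef_eq \<open>i < m\<close> by (simp add: coef_mat_hprod[where A = A and i = i, OF adm A_i x])
  qed
qed

lemma coef_inequality_if_solvable:
  assumes adm: "admissible_weight p"
    and A: "\<forall>i<m. \<forall>j<n. A i j \<in> Ap p" and b: "\<forall>i<m. b i \<in> Ap p"
    and x: "\<forall>j<n. x j \<in> Ap p" and eq: "\<forall>i<m. mat_hprod p n A x i = b i"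
  shows "\<exists>\<delta>>0. \<forall>k y. \<delta> * cmod (inner2 m y (\<lambda>i. coef (b i) k))
                      \<le> adj_apply_norm m n (\<lambda>i j. coef (A i j) k) y"
proof -
  have "\<forall>j<n. \<exists>C\<ge>0. \<forall>k. p k * cmod (coef (x j) k) \<le> C"
  proof (intro allI impI)
    fix j assume "j < n"
    with x obtain C where "C \<ge> 0" "\<And>k. p k * cmod (coef (x j) k) \<le> C"
      using Ap_coef_bound[OF adm] by blast
    then show "\<exists>C\<ge>0. \<forall>k. p k * cmod (coef (x j) k) \<le> C" by blast
  qed
  then obtain C where C: "\<And>j. j < n \<Longrightarrow> C j \<ge> 0 \<and> (\<forall>k. p k * cmod (coef (x j) k) \<le> C j)"
    by metis
  define K where "K = (\<Sum>j<n. C j)"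
  have "K \<ge> 0"
    unfolding K_def using C by (intro sum_nonneg) auto
  have V: "(\<Sum>j<n. cmod (of_real (p k) * coef (x j) k)) \<le> K" for k
    unfolding K_def using C admissible_weight_pos[OF adm, of k]
    by (intro sum_mono) (simp add: norm_mult)
  define \<delta> where "\<delta> = 1 / (K + 1)"
  have "\<delta> > 0" "\<delta> * K \<le> 1"
    unfolding \<delta>_def using \<open>K \<ge> 0\<close> by (simp_all add: field_simps)
  have "\<delta> * cmod (inner2 m y (\<lambda>i. coef (b i) k)) \<le> adj_apply_norm m n (\<lambda>i j. coef (A i j) k) y"
    for k y
  proof -
    let ?M = "\<lambda>i j. coef (A i j) k" and ?V = "\<lambda>j. of_real (p k) * coef (x j) k"
    have "inner2 m y (\<lambda>i. coef (b i) k) = inner2 m y (mat_vec n ?M ?V)"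
      using eq mat_hprod_eq_iff_coef[OF adm A x b] by (intro inner2_cong) auto
    then have "\<delta> * cmod (inner2 m y (\<lambda>i. coef (b i) k))
        \<le> \<delta> * ((\<Sum>j<n. cmod (?V j)) * adj_apply_norm m n ?M y)"
      by (simp only:) (rule mult_left_mono[OF norm_inner2_mat_vec_le less_imp_le[OF \<open>\<delta> > 0\<close>]])
    also have "\<dots> \<le> \<delta> * (K * adj_apply_norm m n ?M y)"
      by (intro mult_left_mono mult_right_mono V adj_apply_norm_nonneg less_imp_le[OF \<open>\<delta> > 0\<close>])
    also have "\<dots> \<le> adj_apply_norm m n ?M y"
      unfolding mult.assoc[symmetric]
      using \<open>\<delta> > 0\<close> \<open>K \<ge> 0\<close> \<open>\<delta> * K \<le> 1\<close>
      by (intro mult_left_le_one_le adj_apply_norm_nonneg) auto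
    finally show ?thesis .
  qed
  with \<open>\<delta> > 0\<close> show ?thesis by blast
qed

lemma solvable_if_coef_inequality:
  assumes adm: "admissible_weight p"
    and A: "\<forall>i<m. \<forall>j<n. A i j \<in> Ap p" and b: "\<forall>i<m. b i \<in> Ap p"
    and "\<delta> > 0"
    and ineq: "\<forall>k y. \<delta> * cmod (inner2 m y (\<lambda>i. coef (b i) k))
                      \<le> adj_apply_norm m n (\<lambda>i j. coef (A i j) k) y"
  shows "\<exists>x. (\<forall>j<n. x j \<in> Ap p) \<and> (\<forall>i<m. mat_hprod p n A x i = b i)"
proof -
  have "\<forall>k. \<exists>v. (\<forall>i<m. mat_vec n (\<lambda>i j. coef (A i j) k) v i = coef (b i) k)
      \<and> sqrt (\<Sum>j<n. (cmod (v j))\<^sup>2) \<le> 1 / \<delta>"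
    using bounded_solution_exists[OF \<open>\<delta> > 0\<close>] ineq by blast
  then obtain V where V_sol: "\<And>k i. i < m \<Longrightarrow> mat_vec n (\<lambda>i j. coef (A i j) k) (V k) i = coef (b i) k"
    and V_norm: "\<And>k. sqrt (\<Sum>j<n. (cmod (V k j))\<^sup>2) \<le> 1 / \<delta>"
    by metis
  define c where "c j k = V k j / of_real (p k)" for j k
  define x where "x j = (\<lambda>z. \<Sum>k. c j k * z ^ k)" for j
  have bound: "p k * cmod (c j k) \<le> 1 / \<delta>" if "j < n" for j k
  proof -
    have "p k * cmod (c j k) = cmod (V k j)"
      using admissible_weight_pos[OF adm, of k] by (simp add: c_def norm_divide)
    also have "\<dots> \<le> sqrt (\<Sum>j<n. (cmod (V k j))\<^sup>2)"
      using that by (intro real_le_rsqrt member_le_sum) auto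
    finally show ?thesis
      using V_norm[of k] by linarith
  qed
  have x: "\<forall>j<n. x j \<in> Ap p"
    unfolding x_def using power_series_in_Ap[OF adm bound] by simp
  have "of_real (p k) * coef (x j) k = V k j" if "j < n" for j k
  proof -
    have "coef (x j) k = c j k"
      unfolding x_def by (rule coef_power_series[OF conv_radius_eq_inf_if_weighted_bound[OF adm bound[OF that]]])
    then show ?thesis
      using admissible_weight_pos[OF adm, of k] by (simp add: c_def)
  qed
  then have "mat_vec n (\<lambda>i j. coef (A i j) k) (\<lambda>j. of_real (p k) * coef (x j) k) i = coef (b i) k"
    if "i < m" for k i
    using V_sol[OF that] by (simp add: mat_vec_def)
  with mat_hprod_eq_iff_coef[OF adm A x b] x show ?thesis
    by blast
qed

theorem mainTheorem12:
  fixes p :: "nat \<Rightarrow> real" and m n :: nat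
    and A :: "nat \<Rightarrow> nat \<Rightarrow> complex \<Rightarrow> complex"
    and b :: "nat \<Rightarrow> complex \<Rightarrow> complex"
  assumes "admissible_weight p"
    and "m \<ge> 1" and "n \<ge> 1"
    and "\<forall>i<m. \<forall>j<n. A i j \<in> Ap p"
    and "\<forall>i<m. b i \<in> Ap p"
  shows "(\<exists>x. (\<forall>j<n. x j \<in> Ap p) \<and> (\<forall>i<m. mat_hprod p n A x i = b i))
     \<longleftrightarrow> (\<exists>\<delta>>0. \<forall>k::nat. \<forall>y::nat \<Rightarrow> complex.
            adj_apply_norm m n (\<lambda>i j. coef (A i j) k) y
              \<ge> \<delta> * cmod (inner2 m y (\<lambda>i. coef (b i) k)))"
  using coef_inequality_if_solvable[OF assms(1,4,5)] solvable_if_coef_inequality[OF assms(1,4,5)]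
  by blast

end
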